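(* Let $X,Y$ be independent $\{0,1\}$-valued random variables with distributions $p_X,p_Y$, and let $q_{Z|XY}$ be a channel with finite output alphabet $\mathcal Z$. Let $f:\{0,1\}^2\to\{0,1\}$, $f(u,v)=\max(u,v)$. Suppose that for each $\epsilon\in[0,1]$, $(U_\epsilon,V_\epsilon)$ is a pair of independent $\{0,1\}$-valued random variables, independent of $X$, such that $f(U_\epsilon,V_\epsilon)$ has distribution $p_Y$; for each fixed $(y,u)$, $p_{f(U_\epsilon,V_\epsilon)|U_\epsilon}(y|u)$ is a continuous function of $\epsilon$; and $U_0=0=V_1$, $U_1=f(U_1,V_1)$, $V_0=f(U_0,V_0)$. For each $\epsilon$, let $Y=f(U_\epsilon,V_\epsilon)$ and let $Z$ be generated from $(X,Y)$ through $q_{Z|XY}$ (so the joint distribution is $p_{U_\epsilon}(u)p_{V_\epsilon}(v)p_X(x)\mathbf 1\{y=f(u,v)\}q_{Z|XY}(z|x,y)$). Define $R_1(\epsilon)=I(X;Z|U_\epsilon)$, $R_U(\epsilon)=I(U_\epsilon;Z)$, $R_V(\epsilon)=I(V_\epsilon;Z|U_\epsilon X)$. Then for every $\epsilon\in[0,1]$, $I(XY;Z)=R_1(\epsilon)+R_U(\epsilon)+R_V(\epsilon)$. Moreover, $R_1$ is continuous in $\epsilon$ and its image contains the interval $[I(X;Z),I(X;Z|Y)]$. *)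

theory Defs
  imports Complex_Main
begin

text \<open>Finite-alphabet information measures. A joint distribution is a pmf
  p on a finite sample space 'w; random variables are functions on 'w.\<close>

definition marg :: "('w::finite \<Rightarrow> real) \<Rightarrow> ('w \<Rightarrow> 'a) \<Rightarrow> 'w \<Rightarrow> real" where
  "marg p A w = (\<Sum>w'\<in>UNIV. if A w' = A w then p w' else 0)"

definition cmi :: "('w::finite \<Rightarrow> real) \<Rightarrow> ('w \<Rightarrow> 'a) \<Rightarrow> ('w \<Rightarrow> 'b) \<Rightarrow> ('w \<Rightarrow> 'c) \<Rightarrow> real" where
  "cmi p A B C = (\<Sum>w\<in>UNIV. if p w = 0 then 0 else
      p w * log 2 ((marg p (\<lambda>w. (A w, B w, C w)) w * marg p C w) /
                   (marg p (\<lambda>w. (A w, C w)) w * marg p (\<lambda>w. (B w, C w)) w)))"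

definition mi :: "('w::finite \<Rightarrow> real) \<Rightarrow> ('w \<Rightarrow> 'a) \<Rightarrow> ('w \<Rightarrow> 'b) \<Rightarrow> real" where
  "mi p A B = cmi p A B (\<lambda>_. ())"

definition is_pmf :: "('a::finite \<Rightarrow> real) \<Rightarrow> bool" where
  "is_pmf p \<longleftrightarrow> (\<forall>a. 0 \<le> p a) \<and> (\<Sum>a\<in>UNIV. p a) = 1"

text \<open>Joint pmf of (X,Y,Z): p_X(x) p_Y(y) q(z|x,y); bits are booleans (0 = False).\<close>
definition joint_xyz :: "(bool \<Rightarrow> real) \<Rightarrow> (bool \<Rightarrow> real) \<Rightarrow> (bool \<Rightarrow> bool \<Rightarrow> 'z \<Rightarrow> real)
    \<Rightarrow> bool \<times> bool \<times> 'z \<Rightarrow> real" where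
  "joint_xyz pX pY q = (\<lambda>(x, y, z). pX x * pY y * q x y z)"

definition joint_uvxz :: "(bool \<Rightarrow> real) \<Rightarrow> (bool \<Rightarrow> real) \<Rightarrow> (bool \<Rightarrow> real)
    \<Rightarrow> (bool \<Rightarrow> bool \<Rightarrow> 'z \<Rightarrow> real) \<Rightarrow> bool \<times> bool \<times> bool \<times> 'z \<Rightarrow> real" where
  "joint_uvxz pU pV pX q = (\<lambda>(u, v, x, z). pU u * pV v * pX x * q x (max u v) z)"

end

theory Submission
  imports Defs "HOL-Real_Asymp.Real_Asymp"
begin

text \<open>Write a = p_U(0), b = p_V(1), and let G(b) be I(X;Z) for the channel
  x \<mapsto> b q(.|x,1) + (1 - b) q(.|x,0), i.e. Y ~ Bernoulli(b) drawn independently of X.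
  Since Z depends on (U,V,X) only through (X, max U V), I(XY;Z) = I(UXV;Z), and the chain rule
  splits this into R_U + R_1 + R_V. Given U = 1 we have Y = 1, and given U = 0 we have Y = V,
  so R_1 = (1 - a) G(1) + a G(b); likewise I(X;Z) = G(p_Y(1)) and
  I(X;Z|Y) = p_Y(1) G(1) + p_Y(0) G(0). G is continuous because t log t is. The weight a need
  not be continuous in \<epsilon>, but a (1 - b) = p_Y(0) is constant, so either R_1 is constantly G(1)
  or a = p_Y(0) / (1 - b) is continuous. The endpoint conditions give R_1(0) = I(X;Z) and
  R_1(1) = I(X;Z|Y), and the intermediate value theorem does the rest.\<close>

lemma sum_UNIV_prod:
  "(\<Sum>w\<in>(UNIV :: ('a::finite \<times> 'b::finite) set). f w) = (\<Sum>a\<in>UNIV. \<Sum>b\<in>UNIV. f (a, b))"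
  by (simp add: sum.cartesian_product flip: UNIV_Times_UNIV)

lemma sum_UNIV_bool: "(\<Sum>b\<in>UNIV. f b) = f True + f False"
  by (simp add: UNIV_bool add.commute)

lemma is_pmf_False: "is_pmf p \<Longrightarrow> p False = 1 - p True"
  unfolding is_pmf_def by (simp add: sum_UNIV_bool)

lemma is_pmf_nonneg: "is_pmf p \<Longrightarrow> 0 \<le> p a"
  unfolding is_pmf_def by simp

lemma is_pmf_le_one: "is_pmf p \<Longrightarrow> p a \<le> 1"
  unfolding is_pmf_def by (metis UNIV_I finite member_le_sum)

section \<open>Entropy and mutual information\<close>

lemma marg_ge:
  assumes "\<And>w. 0 \<le> p w"
  shows "p w \<le> marg p A w"
proof -
  have "p w = (if A w = A w then p w else 0)" by simp
  also have "\<dots> \<le> marg p A w"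
    unfolding marg_def using assms
    by (intro member_le_sum[where f = "\<lambda>w'. if A w' = A w then p w' else 0"]) auto
  finally show ?thesis .
qed

lemma marg_cong:
  assumes "\<And>w w'. A w = A w' \<longleftrightarrow> B w = B w'"
  shows "marg p A = marg p B"
  unfolding marg_def using assms by (auto intro!: ext)

lemma marg_inj: "inj A \<Longrightarrow> marg p A w = p w"
  unfolding marg_def by (simp add: inj_eq)

lemma marg_reindex:
  assumes "inj g" and "{w'. A w' = A w} = range g"
  shows "marg p A w = (\<Sum>i\<in>UNIV. p (g i))"
proof -
  have "marg p A w = sum p {w'. A w' = A w}"
    unfolding marg_def by (simp add: sum.If_cases)
  also have "\<dots> = (\<Sum>i\<in>UNIV. p (g i))"
    unfolding assms(2) using assms(1) by (simp add: sum.reindex)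
  finally show ?thesis .
qed

definition entropy :: "('w::finite \<Rightarrow> real) \<Rightarrow> ('w \<Rightarrow> 'a) \<Rightarrow> real" where
  "entropy p A = - (\<Sum>w\<in>UNIV. p w * log 2 (marg p A w))"

lemma entropy_cong:
  assumes "\<And>w w'. A w = A w' \<longleftrightarrow> B w = B w'"
  shows "entropy p A = entropy p B"
  unfolding entropy_def marg_cong[OF assms] ..

lemma entropy_const: "sum p UNIV = 1 \<Longrightarrow> entropy p (\<lambda>_. c) = 0"
  unfolding entropy_def marg_def by simp

lemma cmi_eq_entropy:
  assumes "\<And>w. 0 \<le> p w"
  shows "cmi p A B C = entropy p (\<lambda>w. (A w, C w)) + entropy p (\<lambda>w. (B w, C w))
    - entropy p (\<lambda>w. (A w, B w, C w)) - entropy p C"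
proof -
  have "(if p w = 0 then 0 else
          p w * log 2 (marg p (\<lambda>w. (A w, B w, C w)) w * marg p C w /
            (marg p (\<lambda>w. (A w, C w)) w * marg p (\<lambda>w. (B w, C w)) w)))
      = p w * (log 2 (marg p (\<lambda>w. (A w, C w)) w) + log 2 (marg p (\<lambda>w. (B w, C w)) w)
          - log 2 (marg p (\<lambda>w. (A w, B w, C w)) w) - log 2 (marg p C w)) * -1" for w
  proof (cases "p w = 0")
    case False
    then have "0 < p w" using assms[of w] by simp
    then have "0 < marg p C w" "0 < marg p (\<lambda>w. (A w, C w)) w" "0 < marg p (\<lambda>w. (B w, C w)) w"
      "0 < marg p (\<lambda>w. (A w, B w, C w)) w"
      using marg_ge[where p = p, OF assms] by (meson less_le_trans)+
    then show ?thesis by (simp add: log_mult log_divide algebra_simps)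
  qed simp
  then show ?thesis
    unfolding cmi_def entropy_def
    by (simp add: sum_subtractf sum.distrib distrib_left right_diff_distrib)
qed

lemma mi_eq_entropy:
  assumes "\<And>w. 0 \<le> p w" and "sum p UNIV = 1"
  shows "mi p A B = entropy p A + entropy p B - entropy p (\<lambda>w. (A w, B w))"
proof -
  have "entropy p (\<lambda>w. (A w, ())) = entropy p A" "entropy p (\<lambda>w. (B w, ())) = entropy p B"
    "entropy p (\<lambda>w. (A w, B w, ())) = entropy p (\<lambda>w. (A w, B w))"
    by (auto intro: entropy_cong)
  then show ?thesis
    unfolding mi_def cmi_eq_entropy[OF assms(1)] entropy_const[OF assms(2)] by simp
qed

lemma mi_chain:
  assumes "\<And>w. 0 \<le> p w" and "sum p UNIV = 1" and "\<And>w. AB w = (A w, B w)"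
  shows "mi p AB Z = mi p A Z + cmi p B Z A"
proof -
  have "entropy p AB = entropy p (\<lambda>w. (B w, A w))"
    "entropy p (\<lambda>w. (A w, Z w)) = entropy p (\<lambda>w. (Z w, A w))"
    "entropy p (\<lambda>w. (AB w, Z w)) = entropy p (\<lambda>w. (B w, Z w, A w))"
    by (auto intro: entropy_cong simp: assms(3))
  then show ?thesis
    unfolding mi_eq_entropy[OF assms(1,2)] cmi_eq_entropy[OF assms(1)] by simp
qed

lemma mi_eq_entropy_kernel:
  assumes "\<And>w. 0 \<le> p w" and "sum p UNIV = 1"
    and "inj (\<lambda>w. (A w, B w))" and "\<And>w. p w = marg p A w * k w"
  shows "mi p A B = entropy p B + (\<Sum>w\<in>UNIV. p w * log 2 (k w))"
proof -
  have "p w * log 2 (p w) = p w * (log 2 (marg p A w) + log 2 (k w))" for w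
  proof (cases "p w = 0")
    case False
    then have "0 < p w" using assms(1)[of w] by simp
    moreover have "0 < marg p A w"
      using marg_ge[where p = p, OF assms(1), of w A] calculation by linarith
    ultimately have "0 < k w" using assms(4)[of w] by (simp add: zero_less_mult_iff)
    with \<open>0 < marg p A w\<close> show ?thesis by (subst assms(4)) (simp add: log_mult)
  qed simp
  then show ?thesis
    unfolding mi_eq_entropy[OF assms(1,2)] entropy_def marg_inj[OF assms(3)]
    by (simp add: algebra_simps sum.distrib)
qed

lemma entropy_pushforward:
  assumes push: "\<And>h. (\<Sum>w\<in>UNIV. p w * h (g w)) = (\<Sum>w\<in>UNIV. P w * h w)"
  shows "entropy p (\<lambda>w. A (g w)) = entropy P A"
proof -
  have "marg p (\<lambda>w. A (g w)) w = marg P A (g w)" for w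
    using push[of "\<lambda>w'. if A w' = A (g w) then 1 else 0"]
    unfolding marg_def by (simp add: if_distrib cong: if_cong)
  then show ?thesis
    unfolding entropy_def using push[of "\<lambda>w. log 2 (marg P A w)"] by simp
qed

lemma cmi_pushforward:
  assumes "\<And>w. 0 \<le> p w" and "\<And>w. 0 \<le> P w"
    and push: "\<And>h. (\<Sum>w\<in>UNIV. p w * h (g w)) = (\<Sum>w\<in>UNIV. P w * h w)"
    and "\<And>w. A' w = A (g w)" "\<And>w. B' w = B (g w)" "\<And>w. C' w = C (g w)"
  shows "cmi p A' B' C' = cmi P A B C"
proof -
  have "A' = (\<lambda>w. A (g w))" "B' = (\<lambda>w. B (g w))" "C' = (\<lambda>w. C (g w))"
    using assms(4-6) by auto
  then show ?thesis
    unfolding cmi_eq_entropy[OF assms(1)] cmi_eq_entropy[OF assms(2)]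
    using entropy_pushforward[OF push, of "\<lambda>w. (A w, C w)"]
      entropy_pushforward[OF push, of "\<lambda>w. (B w, C w)"]
      entropy_pushforward[OF push, of "\<lambda>w. (A w, B w, C w)"] entropy_pushforward[OF push, of C]
    by simp
qed

section \<open>Channels\<close>

definition channel_output :: "('x::finite \<Rightarrow> real) \<Rightarrow> ('x \<Rightarrow> 'z \<Rightarrow> real) \<Rightarrow> 'z \<Rightarrow> real" where
  "channel_output pX t z = (\<Sum>x\<in>UNIV. pX x * t x z)"

definition channel_mi :: "('x::finite \<Rightarrow> real) \<Rightarrow> ('x \<Rightarrow> 'z::finite \<Rightarrow> real) \<Rightarrow> real" where
  "channel_mi pX t = (\<Sum>x\<in>UNIV. \<Sum>z\<in>UNIV. pX x * t x z * log 2 (t x z / channel_output pX t z))"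

lemma cmi_product_channel:
  fixes pC :: "'c::finite \<Rightarrow> real" and pX :: "'x::finite \<Rightarrow> real"
    and T :: "'c \<Rightarrow> 'x \<Rightarrow> 'z::finite \<Rightarrow> real"
  assumes "sum pX UNIV = 1" and "\<And>c x. sum (T c x) UNIV = 1"
  shows "cmi (\<lambda>(c, x, z). pC c * pX x * T c x z) (\<lambda>(c, x, z). x) (\<lambda>(c, x, z). z) (\<lambda>(c, x, z). c)
    = (\<Sum>c\<in>UNIV. pC c * channel_mi pX (T c))"
proof -
  let ?Q = "\<lambda>(c, x, z). pC c * pX x * T c x z"
  let ?C = "\<lambda>(c, x, z). c" and ?X = "\<lambda>(c, x, z). x" and ?Z = "\<lambda>(c, x, z). z"
  have m_XZC: "marg ?Q (\<lambda>w. (?X w, ?Z w, ?C w)) w = ?Q w" for w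
    by (rule marg_inj) (auto simp: inj_on_def)
  have m_C: "marg ?Q ?C (c, x, z) = pC c" for c x z
  proof -
    have "marg ?Q ?C (c, x, z) = (\<Sum>i\<in>UNIV. ?Q ((\<lambda>(x', z'). (c, x', z')) i))"
      by (rule marg_reindex) (auto simp: inj_on_def image_def)
    also have "\<dots> = pC c"
      using assms by (simp add: sum_UNIV_prod mult.assoc flip: sum_distrib_left)
    finally show ?thesis .
  qed
  have m_XC: "marg ?Q (\<lambda>w. (?X w, ?C w)) (c, x, z) = pC c * pX x" for c x z
  proof -
    have "marg ?Q (\<lambda>w. (?X w, ?C w)) (c, x, z) = (\<Sum>i\<in>UNIV. ?Q ((\<lambda>z'. (c, x, z')) i))"
      by (rule marg_reindex) (auto simp: inj_on_def image_def)
    also have "\<dots> = pC c * pX x"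
      using assms by (simp flip: sum_distrib_left)
    finally show ?thesis .
  qed
  have m_ZC: "marg ?Q (\<lambda>w. (?Z w, ?C w)) (c, x, z) = pC c * channel_output pX (T c) z" for c x z
  proof -
    have "marg ?Q (\<lambda>w. (?Z w, ?C w)) (c, x, z) = (\<Sum>i\<in>UNIV. ?Q ((\<lambda>x'. (c, x', z)) i))"
      by (rule marg_reindex) (auto simp: inj_on_def image_def)
    also have "\<dots> = pC c * channel_output pX (T c) z"
      unfolding channel_output_def by (simp add: sum_distrib_left mult.assoc)
    finally show ?thesis .
  qed
  have "cmi ?Q ?X ?Z ?C
      = (\<Sum>(c, x, z)\<in>UNIV. pC c * pX x * T c x z * log 2 (T c x z / channel_output pX (T c) z))"
    unfolding cmi_def
  proof (rule sum.cong[OF refl], goal_cases)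
    case (1 w)
    obtain c x z where w: "w = (c, x, z)" by (cases w)
    show ?case
    proof (cases "?Q w = 0")
      case False
      then have "pC c \<noteq> 0" "pX x \<noteq> 0" by (auto simp: w)
      then show ?thesis using False by (simp add: w m_XZC m_C m_XC m_ZC)
    qed (simp add: w)
  qed
  also have "\<dots> = (\<Sum>c\<in>UNIV. pC c * channel_mi pX (T c))"
    unfolding channel_mi_def by (simp add: sum_UNIV_prod sum_distrib_left mult.assoc)
  finally show ?thesis .
qed

lemma continuous_on_xlogx: "continuous_on {0..} (\<lambda>t::real. t * log 2 t)"
proof (rule continuous_on_eq_continuous_within[THEN iffD2], intro ballI)
  fix t :: real assume t: "t \<in> {0..}"
  show "continuous (at t within {0..}) (\<lambda>t::real. t * log 2 t)"
  proof (cases "t = 0")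
    case True
    have "((\<lambda>t::real. t * log 2 t) \<longlongrightarrow> 0) (at_right 0)" unfolding log_def by real_asymp
    then show ?thesis using True by (simp add: continuous_within at_within_Ici_at_right)
  next
    case False
    then have "isCont (\<lambda>t::real. t * (ln t / ln 2)) t"
      using t by (intro continuous_intros) auto
    then show ?thesis unfolding log_def by (rule continuous_at_imp_continuous_at_within)
  qed
qed

lemma channel_mi_eq_xlogx:
  assumes "\<And>x. 0 \<le> pX x" and "\<And>x z. 0 \<le> t x z"
  shows "channel_mi pX t = (\<Sum>x\<in>UNIV. pX x * (\<Sum>z\<in>UNIV. t x z * log 2 (t x z)))
    - (\<Sum>z\<in>UNIV. channel_output pX t z * log 2 (channel_output pX t z))"
proof -
  have "pX x * t x z * log 2 (t x z / channel_output pX t z)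
      = pX x * (t x z * log 2 (t x z)) - pX x * t x z * log 2 (channel_output pX t z)" for x z
  proof (cases "pX x * t x z = 0")
    case False
    then have "0 < pX x" "0 < t x z" using assms(1)[of x] assms(2)[of x z] by (auto simp: less_le)
    moreover have "pX x * t x z \<le> channel_output pX t z"
      unfolding channel_output_def using assms
      by (intro member_le_sum[where f = "\<lambda>x. pX x * t x z"]) auto
    ultimately have "0 < channel_output pX t z" by (smt (verit) mult_pos_pos)
    with \<open>0 < t x z\<close> show ?thesis by (simp add: log_divide algebra_simps)
  qed auto
  moreover have "(\<Sum>x\<in>UNIV. \<Sum>z\<in>UNIV. pX x * t x z * log 2 (channel_output pX t z))
      = (\<Sum>z\<in>UNIV. channel_output pX t z * log 2 (channel_output pX t z))"
    unfolding channel_output_def by (subst sum.swap) (simp add: sum_distrib_right)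
  ultimately show ?thesis
    unfolding channel_mi_def by (simp add: sum_subtractf sum_distrib_left)
qed

lemma continuous_on_channel_mi:
  assumes "\<And>x. 0 \<le> pX x" and "\<And>s x z. s \<in> S \<Longrightarrow> 0 \<le> t s x z"
    and "\<And>x z. continuous_on S (\<lambda>s. t s x z)"
  shows "continuous_on S (\<lambda>s. channel_mi pX (t s))"
proof -
  have xlogx: "continuous_on S (\<lambda>s. f s * log 2 (f s))"
    if "continuous_on S f" "\<And>s. s \<in> S \<Longrightarrow> 0 \<le> f s" for f
    using continuous_on_compose2[OF continuous_on_xlogx that(1)] that(2) by auto
  have "continuous_on S (\<lambda>s. (\<Sum>x\<in>UNIV. pX x * (\<Sum>z\<in>UNIV. t s x z * log 2 (t s x z)))
      - (\<Sum>z\<in>UNIV. channel_output pX (t s) z * log 2 (channel_output pX (t s) z)))"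
    unfolding channel_output_def using assms
    by (intro continuous_intros xlogx sum_nonneg mult_nonneg_nonneg) auto
  then show ?thesis
    by (rule continuous_on_cong[THEN iffD1, rotated 2]) (auto simp: channel_mi_eq_xlogx assms)
qed

definition mixed_channel :: "('x \<Rightarrow> bool \<Rightarrow> 'z \<Rightarrow> real) \<Rightarrow> real \<Rightarrow> 'x \<Rightarrow> 'z \<Rightarrow> real" where
  "mixed_channel q b x z = b * q x True z + (1 - b) * q x False z"

lemma mixed_channel_nonneg:
  assumes "0 \<le> b" "b \<le> 1" and "\<And>x y z. 0 \<le> q x y z"
  shows "0 \<le> mixed_channel q b x z"
  unfolding mixed_channel_def using assms by simp

lemma continuous_on_channel_mi_mixed:
  assumes "\<And>x. 0 \<le> pX x" and "\<And>x y z. 0 \<le> q x y z"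
    and "continuous_on S b" and "\<And>s. s \<in> S \<Longrightarrow> b s \<in> {0..1}"
  shows "continuous_on S (\<lambda>s. channel_mi pX (mixed_channel q (b s)))"
  using assms
  by (intro continuous_on_channel_mi mixed_channel_nonneg)
    (auto simp: mixed_channel_def intro!: continuous_intros)

section \<open>Splitting Y = max U V\<close>

locale rate_splitting =
  fixes pU pV pX pY :: "bool \<Rightarrow> real" and q :: "bool \<Rightarrow> bool \<Rightarrow> 'z::finite \<Rightarrow> real"
  assumes pU: "is_pmf pU" and pV: "is_pmf pV" and pX: "is_pmf pX" and pY: "is_pmf pY"
    and q: "\<And>x y. is_pmf (q x y)"
    and pY_max: "\<And>y. pY y = (\<Sum>(u, v)\<in>UNIV. if max u v = y then pU u * pV v else 0)"
begin

abbreviation "p \<equiv> joint_uvxz pU pV pX q"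
abbreviation "P \<equiv> joint_xyz pX pY q"

lemma p_apply: "p (u, v, x, z) = pU u * pV v * pX x * q x (max u v) z"
  by (simp add: joint_uvxz_def)

lemma P_apply: "P (x, y, z) = pX x * pY y * q x y z"
  by (simp add: joint_xyz_def)

lemma pY_False: "pY False = pU False * pV False"
  using pY_max[of False] by (simp add: sum_UNIV_prod sum_UNIV_bool)

lemma pY_True: "pY True = pU True * pV True + pU True * pV False + pU False * pV True"
  using pY_max[of True] by (simp add: sum_UNIV_prod sum_UNIV_bool)

lemma p_nonneg: "0 \<le> p w"
  using pU pV pX q unfolding joint_uvxz_def by (auto simp: is_pmf_nonneg split: prod.split)

lemma P_nonneg: "0 \<le> P w"
  using pY pX q unfolding joint_xyz_def by (auto simp: is_pmf_nonneg split: prod.split)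

lemma sum_pX: "sum pX UNIV = 1"
  using pX unfolding is_pmf_def by simp

lemma sum_q: "sum (q x y) UNIV = 1"
  using q unfolding is_pmf_def by simp

lemma P_sum: "sum P UNIV = 1"
  using pX pY unfolding joint_xyz_def is_pmf_def
  by (simp add: sum_UNIV_prod sum_UNIV_bool sum_q mult.assoc flip: sum_distrib_left distrib_right)

lemma pushforward_max:
  "(\<Sum>w\<in>UNIV. p w * h (case w of (u, v, x, z) \<Rightarrow> (x, max u v, z))) = (\<Sum>w\<in>UNIV. P w * h w)"
  unfolding joint_uvxz_def joint_xyz_def
  by (simp add: sum_UNIV_prod sum_UNIV_bool pY_True pY_False sum.distrib algebra_simps)

lemma p_sum: "sum p UNIV = 1"
  using pushforward_max[of "\<lambda>_. 1"] P_sum by simp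

lemma mi_XY_Z_eq_mi_UXV_Z:
  "mi P (\<lambda>(x, y, z). (x, y)) (\<lambda>(x, y, z). z) = mi p (\<lambda>(u, v, x, z). ((u, x), v)) (\<lambda>(u, v, x, z). z)"
proof -
  have marg_XY: "marg P (\<lambda>(x, y, z). (x, y)) (x, y, z) = pX x * pY y" for x y z
  proof -
    have "marg P (\<lambda>(x, y, z). (x, y)) (x, y, z) = (\<Sum>i\<in>UNIV. P ((\<lambda>z'. (x, y, z')) i))"
      by (rule marg_reindex) (auto simp: inj_on_def image_def)
    then show ?thesis by (simp add: joint_xyz_def sum_q flip: sum_distrib_left)
  qed
  have marg_UXV: "marg p (\<lambda>(u, v, x, z). ((u, x), v)) (u, v, x, z) = pU u * pV v * pX x" for u v x z
  proof -
    have "marg p (\<lambda>(u, v, x, z). ((u, x), v)) (u, v, x, z) = (\<Sum>i\<in>UNIV. p ((\<lambda>z'. (u, v, x, z')) i))"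
      by (rule marg_reindex) (auto simp: inj_on_def image_def)
    then show ?thesis by (simp add: joint_uvxz_def sum_q flip: sum_distrib_left)
  qed
  have "mi P (\<lambda>(x, y, z). (x, y)) (\<lambda>(x, y, z). z)
      = entropy P (\<lambda>(x, y, z). z) + (\<Sum>w\<in>UNIV. P w * log 2 (case w of (x, y, z) \<Rightarrow> q x y z))"
    by (rule mi_eq_entropy_kernel[OF P_nonneg P_sum]) (auto simp: inj_on_def marg_XY P_apply)
  also have "\<dots> = entropy p (\<lambda>(u, v, x, z). z)
      + (\<Sum>w\<in>UNIV. p w * log 2 (case w of (u, v, x, z) \<Rightarrow> q x (max u v) z))"
  proof -
    have "entropy p (\<lambda>(u, v, x, z). z) = entropy P (\<lambda>(x, y, z). z)"
      using entropy_pushforward[OF pushforward_max, of "\<lambda>(x, y, z). z"]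
      by (simp add: case_prod_beta')
    moreover have "(\<Sum>w\<in>UNIV. p w * log 2 (case w of (u, v, x, z) \<Rightarrow> q x (max u v) z))
        = (\<Sum>w\<in>UNIV. P w * log 2 (case w of (x, y, z) \<Rightarrow> q x y z))"
      using pushforward_max[of "\<lambda>(x, y, z). log 2 (q x y z)"]
      by (simp add: case_prod_beta')
    ultimately show ?thesis by simp
  qed
  also have "\<dots> = mi p (\<lambda>(u, v, x, z). ((u, x), v)) (\<lambda>(u, v, x, z). z)"
    by (rule mi_eq_entropy_kernel[OF p_nonneg p_sum, symmetric])
      (auto simp: inj_on_def marg_UXV p_apply)
  finally show ?thesis .
qed

lemma mi_XY_Z_rate_split:
  "mi P (\<lambda>(x, y, z). (x, y)) (\<lambda>(x, y, z). z) =
     cmi p (\<lambda>(u, v, x, z). x) (\<lambda>(u, v, x, z). z) (\<lambda>(u, v, x, z). u)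
   + mi p (\<lambda>(u, v, x, z). u) (\<lambda>(u, v, x, z). z)
   + cmi p (\<lambda>(u, v, x, z). v) (\<lambda>(u, v, x, z). z) (\<lambda>(u, v, x, z). (u, x))"
proof -
  have "mi p (\<lambda>(u, v, x, z). ((u, x), v)) (\<lambda>(u, v, x, z). z)
      = mi p (\<lambda>(u, v, x, z). (u, x)) (\<lambda>(u, v, x, z). z)
        + cmi p (\<lambda>(u, v, x, z). v) (\<lambda>(u, v, x, z). z) (\<lambda>(u, v, x, z). (u, x))"
    by (rule mi_chain[OF p_nonneg p_sum]) auto
  moreover have "mi p (\<lambda>(u, v, x, z). (u, x)) (\<lambda>(u, v, x, z). z)
      = mi p (\<lambda>(u, v, x, z). u) (\<lambda>(u, v, x, z). z)
        + cmi p (\<lambda>(u, v, x, z). x) (\<lambda>(u, v, x, z). z) (\<lambda>(u, v, x, z). u)"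
    by (rule mi_chain[OF p_nonneg p_sum]) auto
  ultimately show ?thesis using mi_XY_Z_eq_mi_UXV_Z by linarith
qed

lemma cmi_XZ_given_U:
  "cmi p (\<lambda>(u, v, x, z). x) (\<lambda>(u, v, x, z). z) (\<lambda>(u, v, x, z). u)
   = (1 - pU False) * channel_mi pX (mixed_channel q 1)
     + pU False * channel_mi pX (mixed_channel q (pV True))"
proof -
  define T where "T u x z = (\<Sum>v\<in>UNIV. pV v * q x (max u v) z)" for u x z
  have T_nonneg: "0 \<le> T u x z" for u x z
    unfolding T_def using pV q by (auto simp: is_pmf_nonneg intro!: sum_nonneg)
  have "cmi p (\<lambda>(u, v, x, z). x) (\<lambda>(u, v, x, z). z) (\<lambda>(u, v, x, z). u)
      = cmi (\<lambda>(u, x, z). pU u * pX x * T u x z) (\<lambda>(u, x, z). x) (\<lambda>(u, x, z). z) (\<lambda>(u, x, z). u)"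
  proof (rule cmi_pushforward[where g = "\<lambda>(u, v, x, z). (u, x, z)"])
    show "0 \<le> (case w of (u, x, z) \<Rightarrow> pU u * pX x * T u x z)" for w
      using pU pX T_nonneg by (auto simp: is_pmf_nonneg split: prod.split)
    show "(\<Sum>w\<in>UNIV. p w * h (case w of (u, v, x, z) \<Rightarrow> (u, x, z)))
        = (\<Sum>w\<in>UNIV. (case w of (u, x, z) \<Rightarrow> pU u * pX x * T u x z) * h w)" for h
      unfolding joint_uvxz_def T_def
      by (simp add: sum_UNIV_prod sum_UNIV_bool sum.distrib algebra_simps)
  qed (auto simp: p_nonneg)
  also have "\<dots> = (\<Sum>u\<in>UNIV. pU u * channel_mi pX (T u))"
  proof (rule cmi_product_channel[OF sum_pX])
    show "sum (T u x) UNIV = 1" for u x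
    proof -
      have "sum (T u x) UNIV = (\<Sum>v\<in>UNIV. pV v * sum (q x (max u v)) UNIV)"
        unfolding T_def by (subst sum.swap) (simp add: sum_distrib_left)
      then show ?thesis using pV by (simp add: sum_q is_pmf_def)
    qed
  qed
  also have "\<dots> = (1 - pU False) * channel_mi pX (mixed_channel q 1)
      + pU False * channel_mi pX (mixed_channel q (pV True))"
  proof -
    have "T True = mixed_channel q 1" "T False = mixed_channel q (pV True)"
      unfolding T_def mixed_channel_def
      by (auto simp: sum_UNIV_bool is_pmf_False[OF pV] fun_eq_iff algebra_simps)
    then show ?thesis using is_pmf_False[OF pU] by (simp add: sum_UNIV_bool)
  qed
  finally show ?thesis .
qed

lemma mi_XZ:
  "mi P (\<lambda>(x, y, z). x) (\<lambda>(x, y, z). z) = channel_mi pX (mixed_channel q (pY True))"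
proof -
  have "mi P (\<lambda>(x, y, z). x) (\<lambda>(x, y, z). z)
      = cmi (\<lambda>(c, x, z). 1 * pX x * mixed_channel q (pY True) x z)
          (\<lambda>(c, x, z). x) (\<lambda>(c, x, z). z) (\<lambda>(c :: unit, x, z). c)"
    unfolding mi_def
  proof (rule cmi_pushforward[where g = "\<lambda>(x, y, z). ((), x, z)"])
    show "0 \<le> (case w of (c, x, z) \<Rightarrow> 1 * pX x * mixed_channel q (pY True) x z)"
      for w :: "unit \<times> bool \<times> 'z"
      using pX pY q
      by (auto simp: is_pmf_nonneg is_pmf_le_one intro!: mult_nonneg_nonneg mixed_channel_nonneg
          split: prod.split)
    show "(\<Sum>w\<in>UNIV. P w * h (case w of (x, y, z) \<Rightarrow> ((), x, z)))
        = (\<Sum>w\<in>UNIV. (case w of (c, x, z) \<Rightarrow> 1 * pX x * mixed_channel q (pY True) x z) * h w)" for h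
      unfolding joint_xyz_def mixed_channel_def
      by (simp add: sum_UNIV_prod sum_UNIV_bool UNIV_unit is_pmf_False[OF pY, symmetric]
          sum.distrib algebra_simps)
  qed (auto simp: P_nonneg)
  also have "\<dots> = channel_mi pX (mixed_channel q (pY True))"
  proof (subst cmi_product_channel[OF sum_pX])
    show "sum (mixed_channel q (pY True) x) UNIV = 1" for x
      unfolding mixed_channel_def by (simp add: sum.distrib sum_q flip: sum_distrib_left)
  qed simp
  finally show ?thesis .
qed

lemma cmi_XZ_given_Y:
  "cmi P (\<lambda>(x, y, z). x) (\<lambda>(x, y, z). z) (\<lambda>(x, y, z). y)
   = (1 - pY False) * channel_mi pX (mixed_channel q 1)
     + pY False * channel_mi pX (mixed_channel q 0)"
proof -
  have "cmi P (\<lambda>(x, y, z). x) (\<lambda>(x, y, z). z) (\<lambda>(x, y, z). y)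
      = cmi (\<lambda>(y, x, z). pY y * pX x * q x y z) (\<lambda>(y, x, z). x) (\<lambda>(y, x, z). z) (\<lambda>(y, x, z). y)"
  proof (rule cmi_pushforward[where g = "\<lambda>(x, y, z). (y, x, z)"])
    show "0 \<le> (case w of (y, x, z) \<Rightarrow> pY y * pX x * q x y z)" for w
      using pX pY q by (auto simp: is_pmf_nonneg split: prod.split)
    show "(\<Sum>w\<in>UNIV. P w * h (case w of (x, y, z) \<Rightarrow> (y, x, z)))
        = (\<Sum>w\<in>UNIV. (case w of (y, x, z) \<Rightarrow> pY y * pX x * q x y z) * h w)" for h
      unfolding joint_xyz_def by (simp add: sum_UNIV_prod sum_UNIV_bool algebra_simps)
  qed (auto simp: P_nonneg)
  also have "\<dots> = (\<Sum>y\<in>UNIV. pY y * channel_mi pX (\<lambda>x z. q x y z))"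
    by (rule cmi_product_channel[OF sum_pX]) (simp add: sum_q)
  also have "\<dots> = (1 - pY False) * channel_mi pX (mixed_channel q 1)
      + pY False * channel_mi pX (mixed_channel q 0)"
  proof -
    have "(\<lambda>x z. q x True z) = mixed_channel q 1" "(\<lambda>x z. q x False z) = mixed_channel q 0"
      unfolding mixed_channel_def by (auto simp: fun_eq_iff)
    then show ?thesis using is_pmf_False[OF pY] by (simp add: sum_UNIV_bool)
  qed
  finally show ?thesis .
qed

end

lemma continuous_on_mixture_weight:
  fixes a b g :: "real \<Rightarrow> real"
  assumes b: "continuous_on S b" and gb: "continuous_on S (\<lambda>s. g (b s))"
    and weight: "\<And>s. s \<in> S \<Longrightarrow> a s * (1 - b s) = c"
  shows "continuous_on S (\<lambda>s. (1 - a s) * g 1 + a s * g (b s))"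
proof (cases "c = 0")
  case True
  have const: "(1 - a s) * g 1 + a s * g (b s) = g 1" if "s \<in> S" for s
    using weight[OF that] True by (cases "a s = 0") (auto simp: algebra_simps)
  have "continuous_on S (\<lambda>s. g 1)" by (rule continuous_on_const)
  then show ?thesis
    by (rule continuous_on_cong[THEN iffD1, rotated 2]) (auto simp: const)
next
  case False
  then have b_ne: "1 - b s \<noteq> 0" if "s \<in> S" for s
    using weight[OF that] by auto
  have a_eq: "a s = c / (1 - b s)" if "s \<in> S" for s
    using weight[OF that] b_ne[OF that] by (simp add: eq_divide_eq)
  have "continuous_on S (\<lambda>s. (1 - c / (1 - b s)) * g 1 + c / (1 - b s) * g (b s))"
    using b_ne by (intro continuous_intros b gb) auto
  then show ?thesis
    by (rule continuous_on_cong[THEN iffD1, rotated 2]) (auto simp: a_eq)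
qed

theorem lemma1:
  fixes pX pY :: "bool \<Rightarrow> real"
    and q :: "bool \<Rightarrow> bool \<Rightarrow> 'z::finite \<Rightarrow> real"
    and pU pV :: "real \<Rightarrow> bool \<Rightarrow> real"
  assumes pX: "is_pmf pX" and pY: "is_pmf pY"
    and q: "\<And>x y. is_pmf (q x y)"
    and pU: "\<And>e. e \<in> {0..1} \<Longrightarrow> is_pmf (pU e)"
    and pV: "\<And>e. e \<in> {0..1} \<Longrightarrow> is_pmf (pV e)"
    and f_distr: "\<And>e y. e \<in> {0..1} \<Longrightarrow>
        pY y = (\<Sum>(u, v)\<in>UNIV. if max u v = y then pU e u * pV e v else 0)"
    and cont: "\<And>y u. continuous_on {0..1}
        (\<lambda>e. \<Sum>v\<in>UNIV. if max u v = y then pV e v else 0)"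
    and U0: "pU 0 True = 0"
    and V1: "pV 1 True = 0"
    and U1: "pU 1 False * pV 1 True = 0"
    and V0: "pU 0 True * pV 0 False = 0"
  shows "(\<forall>e\<in>{0..1}.
           mi (joint_xyz pX pY q) (\<lambda>(x, y, z). (x, y)) (\<lambda>(x, y, z). z) =
             cmi (joint_uvxz (pU e) (pV e) pX q) (\<lambda>(u, v, x, z). x) (\<lambda>(u, v, x, z). z) (\<lambda>(u, v, x, z). u)
           + mi (joint_uvxz (pU e) (pV e) pX q) (\<lambda>(u, v, x, z). u) (\<lambda>(u, v, x, z). z)
           + cmi (joint_uvxz (pU e) (pV e) pX q) (\<lambda>(u, v, x, z). v) (\<lambda>(u, v, x, z). z) (\<lambda>(u, v, x, z). (u, x)))
       \<and> continuous_on {0..1}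
           (\<lambda>e. cmi (joint_uvxz (pU e) (pV e) pX q) (\<lambda>(u, v, x, z). x) (\<lambda>(u, v, x, z). z) (\<lambda>(u, v, x, z). u))
       \<and> {mi (joint_xyz pX pY q) (\<lambda>(x, y, z). x) (\<lambda>(x, y, z). z) ..
          cmi (joint_xyz pX pY q) (\<lambda>(x, y, z). x) (\<lambda>(x, y, z). z) (\<lambda>(x, y, z). y)}
         \<subseteq> (\<lambda>e. cmi (joint_uvxz (pU e) (pV e) pX q) (\<lambda>(u, v, x, z). x) (\<lambda>(u, v, x, z). z) (\<lambda>(u, v, x, z). u)) ` {0..1}"
proof -
  have split: "rate_splitting (pU e) (pV e) pX pY q" if "e \<in> {0..1}" for e
    using that by (intro rate_splitting.intro pU pV pX pY q f_distr)
  define G where "G b = channel_mi pX (mixed_channel q b)" for b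
  define R where "R = (\<lambda>e. cmi (joint_uvxz (pU e) (pV e) pX q)
    (\<lambda>(u, v, x, z). x) (\<lambda>(u, v, x, z). z) (\<lambda>(u, v, x, z). u))"
  have R_eq: "R e = (1 - pU e False) * G 1 + pU e False * G (pV e True)" if "e \<in> {0..1}" for e
    unfolding R_def G_def using rate_splitting.cmi_XZ_given_U[OF split[OF that]] by simp
  have weight: "pU e False * (1 - pV e True) = pY False" if "e \<in> {0..1}" for e
    using rate_splitting.pY_False[OF split[OF that]] is_pmf_False[OF pV[OF that]] by simp
  have "continuous_on {0..1} (\<lambda>e. pV e True)"
    using cont[of False True] by (simp add: sum_UNIV_bool)
  moreover from this have "continuous_on {0..1} (\<lambda>e. G (pV e True))"
    unfolding G_def using pX q pV
    by (intro continuous_on_channel_mi_mixed) (auto simp: is_pmf_nonneg is_pmf_le_one)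
  ultimately have "continuous_on {0..1} (\<lambda>e. (1 - pU e False) * G 1 + pU e False * G (pV e True))"
    using weight by (rule continuous_on_mixture_weight)
  then have R_cont: "continuous_on {0..1} R"
    by (rule continuous_on_cong[THEN iffD1, rotated 2]) (auto simp: R_eq)
  have R0: "R 0 = mi (joint_xyz pX pY q) (\<lambda>(x, y, z). x) (\<lambda>(x, y, z). z)"
    using R_eq[of 0] weight[of 0] U0 is_pmf_False[OF pU[of 0]] is_pmf_False[OF pY]
      rate_splitting.mi_XZ[OF split[of 0]]
    by (simp add: G_def)
  have R1: "R 1 = cmi (joint_xyz pX pY q) (\<lambda>(x, y, z). x) (\<lambda>(x, y, z). z) (\<lambda>(x, y, z). y)"
    using R_eq[of 1] weight[of 1] V1 rate_splitting.cmi_XZ_given_Y[OF split[of 1]]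
    by (simp add: G_def)
  have "{R 0 .. R 1} \<subseteq> R ` {0..1}"
    by (intro connected_contains_Icc connected_continuous_image R_cont) auto
  then have "{mi (joint_xyz pX pY q) (\<lambda>(x, y, z). x) (\<lambda>(x, y, z). z) ..
      cmi (joint_xyz pX pY q) (\<lambda>(x, y, z). x) (\<lambda>(x, y, z). z) (\<lambda>(x, y, z). y)} \<subseteq> R ` {0..1}"
    by (simp only: R0 R1)
  then show ?thesis
    using rate_splitting.mi_XY_Z_rate_split[OF split] R_cont unfolding R_def by blast
qed

end
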